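(* Let $\alpha=(n_1,m_1,\dots,n_p,m_p)\in\mathbb Z_{\ge0}^{2p}$, $a=(a_{hk})\in I(\alpha)$ and $i,j\in\{1,\dots,p\}$. (1) Suppose $a_{ij}=L_{ij}(\alpha,a)$. If $L_{ij}(\alpha,a)=m_j-\sum_{h=1}^{i-1}a_{hj}$, then $a_{qj}=0$ for all $q=i+1,\dots,p$. If $L_{ij}(\alpha,a)=n_i-\sum_{k=1}^{j-1}a_{ik}$, then $a_{it}=0$ for all $t=j+1,\dots,p$. (2) Suppose $a_{ij}=l_{ij}(\alpha,a)$ and $l_{ij}(\alpha,a)=\sum_{h=1}^i n_h-\sum_{h=j+1}^p m_h-\sum_{h\le i,\,k\le j,\,(h,k)\neq(i,j)}a_{hk}$. Then $a_{it}=m_t-\sum_{h=1}^{i-1}a_{ht}$ for all $t=j+1,\dots,p$; $a_{qj}=n_q-\sum_{k=1}^{j-1}a_{qk}$ for all $q=i+1,\dots,p$; and $a_{qt}=0$ for all $q=i+1,\dots,p$ and $t=j+1,\dots,p$.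
   Context: $I(\alpha)$ is the set of $a=(a_{11},\dots,a_{1p},a_{21},\dots,a_{pp})\in\mathbb Z_{\ge0}^{p^2}$ with $l_{ij}(\alpha,a)\le a_{ij}\le L_{ij}(\alpha,a)$ for all $i,j=1,\dots,p$, where $$l_{ij}(\alpha,a)=\max\Big(0,\ \sum_{h=1}^i n_h-\sum_{h=j+1}^p m_h-\sum_{\substack{h\le i,\,k\le j\\ (h,k)\neq(i,j)}}a_{hk}\Big),\qquad L_{ij}(\alpha,a)=\min\Big(n_i-\sum_{h=1}^{j-1}a_{ih},\ m_j-\sum_{h=1}^{i-1}a_{hj}\Big).$$ (The paper writes $\wedge$ for this max and $\vee$ for this min.) *)

theory Defs
  imports Main
begin

text \<open>alpha = (n_1,m_1,...,n_p,m_p) is given by two functions n m on indices 1..p;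
  a = (a_hk) is a function on index pairs (values outside 1..p are irrelevant).\<close>

definition lbd :: "nat \<Rightarrow> (nat \<Rightarrow> int) \<Rightarrow> (nat \<Rightarrow> int) \<Rightarrow> (nat \<Rightarrow> nat \<Rightarrow> int) \<Rightarrow> nat \<Rightarrow> nat \<Rightarrow> int" where
  "lbd p n m a i j = max 0 ((\<Sum>h=1..i. n h) - (\<Sum>h=j+1..p. m h)
      - (\<Sum>(h,k)\<in>({1..i} \<times> {1..j}) - {(i,j)}. a h k))"

definition Ubd :: "(nat \<Rightarrow> int) \<Rightarrow> (nat \<Rightarrow> int) \<Rightarrow> (nat \<Rightarrow> nat \<Rightarrow> int) \<Rightarrow> nat \<Rightarrow> nat \<Rightarrow> int" where
  "Ubd n m a i j = min (n i - (\<Sum>h=1..j-1. a i h)) (m j - (\<Sum>h=1..i-1. a h j))"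

definition inI :: "nat \<Rightarrow> (nat \<Rightarrow> int) \<Rightarrow> (nat \<Rightarrow> int) \<Rightarrow> (nat \<Rightarrow> nat \<Rightarrow> int) \<Rightarrow> bool" where
  "inI p n m a \<longleftrightarrow> (\<forall>i\<in>{1..p}. \<forall>j\<in>{1..p}.
      0 \<le> a i j \<and> lbd p n m a i j \<le> a i j \<and> a i j \<le> Ubd n m a i j)"

end

theory Submission
  imports Defs
begin

text \<open>Everything follows from saturation of partial row and column sums. The upper bound
  a_ij \<le> L_ij says that the partial column sums a_1j + ... + a_qj never exceed m_j (dually for
  rows); as the entries are nonnegative, once a partial sum reaches its bound every later entry
  of that column (row) vanishes. The lower bound l_ij \<le> a_ij says that the block sum
  S(x,y) = \<Sum>{a_hk | h \<le> x, k \<le> y} is at least n_1 + ... + n_x - (m_(y+1) + ... + m_p).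
  If this is an equality at (i,j), comparing with the same bound at (i,p) gives
  \<Sum>{m_k | k > j} \<le> \<Sum>{a_hk | h \<le> i, k > j}, which together with the termwise column
  bounds saturates every column k > j at row i; likewise the bound at (p,j) saturates every
  row q > i at column j.\<close>

lemma sum_atLeastAtMost_split:
  fixes f :: "nat \<Rightarrow> 'a::comm_monoid_add"
  assumes "i \<le> p"
  shows "sum f {1..p} = sum f {1..i} + sum f {i+1..p}"
proof -
  have "{1..p} = {1..i} \<union> {i+1..p}" using assms by auto
  then show ?thesis by (simp add: sum.union_disjoint ivl_disj_int)
qed

lemma sum_atLeastAtMost_last:
  fixes f :: "nat \<Rightarrow> 'a::comm_monoid_add"
  assumes "1 \<le> i"
  shows "sum f {1..i} = sum f {1..i-1} + f i"
  using assms sum_atLeastAtMost_split[of "i-1" i f] by simp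

lemma sum_atLeastAtMost_eq_iff_last_eq_diff:
  fixes f :: "nat \<Rightarrow> 'a::ab_group_add"
  assumes "1 \<le> i"
  shows "sum f {1..i} = c \<longleftrightarrow> f i = c - sum f {1..i-1}"
  using sum_atLeastAtMost_last[OF assms, of f] by (auto simp: algebra_simps)

lemma sum_eq_if_le_and_sum_ge:
  fixes f g :: "'b \<Rightarrow> 'a::ordered_cancel_comm_monoid_add"
  assumes "finite A" "\<forall>x\<in>A. f x \<le> g x" "sum g A \<le> sum f A"
  shows "\<forall>x\<in>A. f x = g x"
proof (rule ccontr)
  assume "\<not> (\<forall>x\<in>A. f x = g x)"
  then obtain x where "x \<in> A" "f x < g x" using assms(2) by force
  then have "sum f A < sum g A" using assms by (intro sum_strict_mono_ex1) auto
  then show False using assms(3) by simp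
qed

lemma sum_product_minus_corner:
  fixes a :: "nat \<Rightarrow> nat \<Rightarrow> 'a::ab_group_add"
  assumes "1 \<le> x" "1 \<le> y"
  shows "(\<Sum>(h,k)\<in>({1..x} \<times> {1..y}) - {(x,y)}. a h k) = (\<Sum>h=1..x. \<Sum>k=1..y. a h k) - a x y"
  using assms by (simp add: sum_diff1 sum.cartesian_product)

context
  fixes p :: nat and n m :: "nat \<Rightarrow> int" and a :: "nat \<Rightarrow> nat \<Rightarrow> int"
  assumes aI: "inI p n m a"
begin

lemma inI_nonneg: "h \<in> {1..p} \<Longrightarrow> k \<in> {1..p} \<Longrightarrow> 0 \<le> a h k"
  using aI unfolding inI_def by blast

lemma inI_column_sum_le:
  assumes "q \<in> {1..p}" "k \<in> {1..p}"
  shows "(\<Sum>h=1..q. a h k) \<le> m k"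
proof -
  have "a q k \<le> m k - (\<Sum>h=1..q-1. a h k)"
    using aI assms unfolding inI_def Ubd_def by fastforce
  then show ?thesis using assms sum_atLeastAtMost_last[of q "\<lambda>h. a h k"] by simp
qed

lemma inI_row_sum_le:
  assumes "q \<in> {1..p}" "k \<in> {1..p}"
  shows "(\<Sum>t=1..k. a q t) \<le> n q"
proof -
  have "a q k \<le> n q - (\<Sum>t=1..k-1. a q t)"
    using aI assms unfolding inI_def Ubd_def by fastforce
  then show ?thesis using assms sum_atLeastAtMost_last[of k "a q"] by simp
qed

lemma inI_block_sum_ge:
  assumes "x \<in> {1..p}" "y \<in> {1..p}"
  shows "(\<Sum>h=1..x. n h) - (\<Sum>h=y+1..p. m h) \<le> (\<Sum>h=1..x. \<Sum>k=1..y. a h k)"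
proof -
  have "lbd p n m a x y \<le> a x y" using aI assms unfolding inI_def by blast
  then show ?thesis using assms sum_product_minus_corner[of x y a] by (simp add: lbd_def)
qed

lemma inI_column_zero_below_saturated:
  assumes i: "i \<in> {1..p}" and k: "k \<in> {1..p}" and q: "q \<in> {i+1..p}"
    and saturated: "(\<Sum>h=1..i. a h k) = m k"
  shows "a q k = 0"
proof -
  have "(\<Sum>h=1..i. a h k) + a q k \<le> (\<Sum>h=1..q. a h k)"
    using i q k sum_atLeastAtMost_split[of i q "\<lambda>h. a h k"]
    by (auto intro!: member_le_sum inI_nonneg)
  then show ?thesis using inI_column_sum_le[of q k] inI_nonneg[of q k] saturated i k q by auto
qed

lemma inI_row_zero_after_saturated:
  assumes q: "q \<in> {1..p}" and j: "j \<in> {1..p}" and t: "t \<in> {j+1..p}"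
    and saturated: "(\<Sum>k=1..j. a q k) = n q"
  shows "a q t = 0"
proof -
  have "(\<Sum>k=1..j. a q k) + a q t \<le> (\<Sum>k=1..t. a q k)"
    using q t j sum_atLeastAtMost_split[of j t "a q"]
    by (auto intro!: member_le_sum inI_nonneg)
  then show ?thesis using inI_row_sum_le[of q t] inI_nonneg[of q t] saturated q j t by auto
qed

lemma inI_columns_saturated_if_block_tight:
  assumes i: "i \<in> {1..p}" and j: "j \<in> {1..p}"
    and tight: "(\<Sum>h=1..i. \<Sum>k=1..j. a h k) = (\<Sum>h=1..i. n h) - (\<Sum>h=j+1..p. m h)"
  shows "\<forall>k\<in>{j+1..p}. (\<Sum>h=1..i. a h k) = m k"
proof -
  have "j \<le> p" using j by simp
  then have "(\<Sum>h=1..i. \<Sum>k=1..p. a h k) = (\<Sum>h=1..i. \<Sum>k=1..j. a h k) + (\<Sum>h=1..i. \<Sum>k=j+1..p. a h k)"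
    by (simp only: sum_atLeastAtMost_split sum.distrib)
  also have "(\<Sum>h=1..i. \<Sum>k=j+1..p. a h k) = (\<Sum>k=j+1..p. \<Sum>h=1..i. a h k)"
    by (rule sum.swap)
  finally have "(\<Sum>h=1..i. \<Sum>k=1..p. a h k) = (\<Sum>h=1..i. \<Sum>k=1..j. a h k) + (\<Sum>k=j+1..p. \<Sum>h=1..i. a h k)" .
  moreover have "(\<Sum>h=1..i. n h) \<le> (\<Sum>h=1..i. \<Sum>k=1..p. a h k)"
    using inI_block_sum_ge[of i p] i by simp
  ultimately have "(\<Sum>k=j+1..p. m k) \<le> (\<Sum>k=j+1..p. \<Sum>h=1..i. a h k)"
    using tight by simp
  then show ?thesis
    using inI_column_sum_le i j by (intro sum_eq_if_le_and_sum_ge) auto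
qed

lemma inI_rows_saturated_if_block_tight:
  assumes i: "i \<in> {1..p}" and j: "j \<in> {1..p}"
    and tight: "(\<Sum>h=1..i. \<Sum>k=1..j. a h k) = (\<Sum>h=1..i. n h) - (\<Sum>h=j+1..p. m h)"
  shows "\<forall>q\<in>{i+1..p}. (\<Sum>k=1..j. a q k) = n q"
proof -
  have "(\<Sum>h=1..p. \<Sum>k=1..j. a h k) = (\<Sum>h=1..i. \<Sum>k=1..j. a h k) + (\<Sum>q=i+1..p. \<Sum>k=1..j. a q k)"
    and "(\<Sum>h=1..p. n h) = (\<Sum>h=1..i. n h) + (\<Sum>q=i+1..p. n q)"
    using i sum_atLeastAtMost_split[of i p] by auto
  moreover have "(\<Sum>h=1..p. n h) - (\<Sum>h=j+1..p. m h) \<le> (\<Sum>h=1..p. \<Sum>k=1..j. a h k)"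
    using inI_block_sum_ge[of p j] i j by simp
  ultimately have "(\<Sum>q=i+1..p. n q) \<le> (\<Sum>q=i+1..p. \<Sum>k=1..j. a q k)"
    using tight by simp
  then show ?thesis
    using inI_row_sum_le i j by (intro sum_eq_if_le_and_sum_ge) auto
qed

lemma inI_block_tight_consequences:
  assumes i: "i \<in> {1..p}" and j: "j \<in> {1..p}"
    and tight: "(\<Sum>h=1..i. \<Sum>k=1..j. a h k) = (\<Sum>h=1..i. n h) - (\<Sum>h=j+1..p. m h)"
  shows "\<forall>t\<in>{j+1..p}. a i t = m t - (\<Sum>h=1..i-1. a h t)"
    and "\<forall>q\<in>{i+1..p}. a q j = n q - (\<Sum>k=1..j-1. a q k)"
    and "\<forall>q\<in>{i+1..p}. \<forall>t\<in>{j+1..p}. a q t = 0"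
proof -
  note columns = inI_columns_saturated_if_block_tight[OF i j tight]
  note rows = inI_rows_saturated_if_block_tight[OF i j tight]
  show "\<forall>t\<in>{j+1..p}. a i t = m t - (\<Sum>h=1..i-1. a h t)"
    using columns i sum_atLeastAtMost_eq_iff_last_eq_diff[of i "\<lambda>h. a h _"] by simp
  show "\<forall>q\<in>{i+1..p}. a q j = n q - (\<Sum>k=1..j-1. a q k)"
    using rows j sum_atLeastAtMost_eq_iff_last_eq_diff[of j "a _"] by simp
  show "\<forall>q\<in>{i+1..p}. \<forall>t\<in>{j+1..p}. a q t = 0"
  proof (intro ballI)
    fix q t assume "q \<in> {i+1..p}" "t \<in> {j+1..p}"
    then show "a q t = 0"
      using columns j by (intro inI_column_zero_below_saturated[OF i]) auto
  qed
qed

end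

theorem propositionA4:
  fixes p :: nat and n m :: "nat \<Rightarrow> int" and a :: "nat \<Rightarrow> nat \<Rightarrow> int" and i j :: nat
  assumes alpha: "\<forall>h\<in>{1..p}. 0 \<le> n h \<and> 0 \<le> m h"
    and aI: "inI p n m a"
    and i: "i \<in> {1..p}" and j: "j \<in> {1..p}"
  shows
   "(a i j = Ubd n m a i j \<longrightarrow>
       (Ubd n m a i j = m j - (\<Sum>h=1..i-1. a h j) \<longrightarrow> (\<forall>q\<in>{i+1..p}. a q j = 0)) \<and>
       (Ubd n m a i j = n i - (\<Sum>k=1..j-1. a i k) \<longrightarrow> (\<forall>t\<in>{j+1..p}. a i t = 0)))
    \<and>
    ((a i j = lbd p n m a i j \<and>
      lbd p n m a i j = (\<Sum>h=1..i. n h) - (\<Sum>h=j+1..p. m h)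
         - (\<Sum>(h,k)\<in>({1..i} \<times> {1..j}) - {(i,j)}. a h k)) \<longrightarrow>
       (\<forall>t\<in>{j+1..p}. a i t = m t - (\<Sum>h=1..i-1. a h t)) \<and>
       (\<forall>q\<in>{i+1..p}. a q j = n q - (\<Sum>k=1..j-1. a q k)) \<and>
       (\<forall>q\<in>{i+1..p}. \<forall>t\<in>{j+1..p}. a q t = 0))"
proof -
  have column_zero: "\<forall>q\<in>{i+1..p}. a q j = 0" if "a i j = m j - (\<Sum>h=1..i-1. a h j)"
    using inI_column_zero_below_saturated[OF aI i j] that i
      sum_atLeastAtMost_eq_iff_last_eq_diff[of i "\<lambda>h. a h j"] by simp
  have row_zero: "\<forall>t\<in>{j+1..p}. a i t = 0" if "a i j = n i - (\<Sum>k=1..j-1. a i k)"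
    using inI_row_zero_after_saturated[OF aI i j] that j
      sum_atLeastAtMost_eq_iff_last_eq_diff[of j "a i"] by simp
  have block_tight: "(\<Sum>h=1..i. \<Sum>k=1..j. a h k) = (\<Sum>h=1..i. n h) - (\<Sum>h=j+1..p. m h)"
    if "a i j = lbd p n m a i j"
      and "lbd p n m a i j = (\<Sum>h=1..i. n h) - (\<Sum>h=j+1..p. m h)
         - (\<Sum>(h,k)\<in>({1..i} \<times> {1..j}) - {(i,j)}. a h k)"
    using that i j sum_product_minus_corner[of i j a] by simp
  show ?thesis
  proof (intro conjI impI)
    show "\<forall>q\<in>{i+1..p}. a q j = 0"
      if "a i j = Ubd n m a i j" "Ubd n m a i j = m j - (\<Sum>h=1..i-1. a h j)"
      using column_zero[OF trans[OF that]] .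
    show "\<forall>t\<in>{j+1..p}. a i t = 0"
      if "a i j = Ubd n m a i j" "Ubd n m a i j = n i - (\<Sum>k=1..j-1. a i k)"
      using row_zero[OF trans[OF that]] .
  qed (use inI_block_tight_consequences[OF aI i j block_tight] in blast)+
qed

end
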